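(* Let $n\ge4$ and consider the cycle graph $C_n$. For $i\in[n]$ let $\mathrm{Dec}_i^n:=i(i-1)\cdots 1\,n(n-1)\cdots(i+1)$. (1) If $i\le n-2$, then for every $j\in[n]$: $B(j,\mathrm{Dec}_i^n,C_n)=j$ if $j\le n-2$; $B(n-1,\mathrm{Dec}_i^n,C_n)=i(i-1)\cdots1\,n(n-1)$; $B(n,\mathrm{Dec}_i^n,C_n)=i(i-1)\cdots1\,n$. Consequently the number of $C_n$-friendship parking functions with outcome $\mathrm{Dec}_i^n$ is $(i+1)(i+2)$. (2) For $i=n-1$: $B(j,\mathrm{Dec}_{n-1}^n,C_n)=j$ for all $j\in[n-1]$, and $B(n,\mathrm{Dec}_{n-1}^n,C_n)=(n-1)\cdots1\,n$. Consequently the number of $C_n$-friendship parking functions with outcome $\mathrm{Dec}_{n-1}^n$ is $n$. (3) For $i=n$: $B(j,\mathrm{Dec}_n^n,C_n)=j$ for all $j\in[n]$, and the number of $C_n$-friendship parking functions with outcome $\mathrm{Dec}_n^n$ is $1$.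
   Context: $C_n$ ($n\ge3$) is the cycle graph with vertex set $[n]$ and edges $\{i,i+1\}$ for $i\in[n-1]$ and $\{n,1\}$. Permutations are in one-line notation. Friendship parking process for a graph $G$ on $[n]$ and a parking preference $p\in[n]^n$: cars $1,\dots,n$ enter in order into spots $1,\dots,n$ (initially empty); spot $k$ is available for car $i$ if it is unoccupied when $i$ enters and each of spots $k-1,k+1$ is unoccupied or occupied by a car adjacent to $i$ in $G$ (spots $0,n+1$ count as unoccupied); car $i$ parks in the first available spot $k\ge p_i$, failing otherwise. $p$ is a $G$-friendship parking function if all cars park; its outcome is the permutation $\pi$ with $\pi_k$ the car in spot $k$ at the end. Blockers: for a permutation $\pi$ that is a Hamiltonian path of $G$ (i.e. $\{\pi_k,\pi_{k+1}\}$ is an edge for all $k$) and $i\in[n]$, $j=\pi_k$ is a blocker for $i$ if (1) $j\le i$, or (2) $j>i$ and some $\ell\in\{\pi_{k-1},\pi_{k+1}\}$ satisfies $\ell<i$ and $\ell$ not adjacent to $i$ in $G$. The blocking sequence $B(i,\pi,G)$ is the longest contiguous block of $\pi$ ending at $i$ consisting of blockers for $i$. *)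

theory Defs
  imports Main
begin

definition cycle_adj :: "nat \<Rightarrow> nat \<Rightarrow> nat \<Rightarrow> bool" where
  "cycle_adj n a b \<longleftrightarrow> a \<in> {1..n} \<and> b \<in> {1..n} \<and>
     (b = a + 1 \<or> a = b + 1 \<or> (a = 1 \<and> b = n) \<or> (a = n \<and> b = 1))"

(* Parking state: occ k = car in spot k, 0 = empty; spots outside 1..n are always empty. *)
definition spot_available ::
  "(nat \<Rightarrow> nat \<Rightarrow> bool) \<Rightarrow> nat \<Rightarrow> (nat \<Rightarrow> nat) \<Rightarrow> nat \<Rightarrow> nat \<Rightarrow> bool" where
  "spot_available G n occ i k \<longleftrightarrow> 1 \<le> k \<and> k \<le> n \<and> occ k = 0 \<and>
     (occ (k - 1) = 0 \<or> G i (occ (k - 1))) \<and>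
     (occ (k + 1) = 0 \<or> G i (occ (k + 1)))"

definition park_car ::
  "(nat \<Rightarrow> nat \<Rightarrow> bool) \<Rightarrow> nat \<Rightarrow> (nat \<Rightarrow> nat) \<Rightarrow> nat \<Rightarrow> nat \<Rightarrow> (nat \<Rightarrow> nat) option" where
  "park_car G n occ i pref =
     (if \<exists>k. pref \<le> k \<and> spot_available G n occ i k
      then Some (occ((LEAST k. pref \<le> k \<and> spot_available G n occ i k) := i))
      else None)"

(* Run cars 1..n in order; p ! (i-1) is the preference of car i. None = some car fails. *)
definition fpp_run :: "(nat \<Rightarrow> nat \<Rightarrow> bool) \<Rightarrow> nat \<Rightarrow> nat list \<Rightarrow> (nat \<Rightarrow> nat) option" where
  "fpp_run G n p = foldl (\<lambda>st i. case st of None \<Rightarrow> None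
                                   | Some occ \<Rightarrow> park_car G n occ i (p ! (i - 1)))
                     (Some (\<lambda>_. 0)) [1..<n+1]"

(* Outcome permutation (one-line notation) if p is a G-friendship parking function. *)
definition fpp_outcome :: "(nat \<Rightarrow> nat \<Rightarrow> bool) \<Rightarrow> nat \<Rightarrow> nat list \<Rightarrow> nat list option" where
  "fpp_outcome G n p = map_option (\<lambda>occ. map occ [1..<n+1]) (fpp_run G n p)"

definition num_fpf_with_outcome :: "(nat \<Rightarrow> nat \<Rightarrow> bool) \<Rightarrow> nat \<Rightarrow> nat list \<Rightarrow> nat" where
  "num_fpf_with_outcome G n \<pi> =
     card {p. length p = n \<and> set p \<subseteq> {1..n} \<and> fpp_outcome G n p = Some \<pi>}"

(* Position k (0-indexed) of \<pi> holds a blocker for i. *)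
definition is_blocker :: "(nat \<Rightarrow> nat \<Rightarrow> bool) \<Rightarrow> nat list \<Rightarrow> nat \<Rightarrow> nat \<Rightarrow> bool" where
  "is_blocker G \<pi> i k \<longleftrightarrow> k < length \<pi> \<and>
     (\<pi> ! k \<le> i \<or>
      (\<pi> ! k > i \<and> (\<exists>m. (m + 1 = k \<or> m = k + 1) \<and> m < length \<pi> \<and>
                         \<pi> ! m < i \<and> \<not> G (\<pi> ! m) i)))"

definition pos_of :: "nat list \<Rightarrow> nat \<Rightarrow> nat" where
  "pos_of \<pi> i = (LEAST m. m < length \<pi> \<and> \<pi> ! m = i)"

definition blocking_seq :: "nat \<Rightarrow> nat list \<Rightarrow> (nat \<Rightarrow> nat \<Rightarrow> bool) \<Rightarrow> nat list" where
  "blocking_seq i \<pi> G =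
     (let m = pos_of \<pi> i;
          s = (LEAST s. s \<le> m \<and> (\<forall>k. s \<le> k \<and> k \<le> m \<longrightarrow> is_blocker G \<pi> i k))
      in drop s (take (m + 1) \<pi>))"

definition Dec :: "nat \<Rightarrow> nat \<Rightarrow> nat list" where
  "Dec n i = rev [1..<i+1] @ rev [i+1..<n+1]"

end

theory Submission
  imports Defs
begin

text \<open>
  A preference list yields the outcome \<open>\<pi>\<close> exactly when, for every \<open>t\<close>, car \<open>t + 1\<close> parks at
  its final spot \<open>P\<close> while cars \<open>1, \<dots>, t\<close> already occupy their final spots. These conditions
  constrain different entries of the list, so the number of parking functions with outcome
  \<open>\<pi>\<close> is a product over the cars; the admissible preferences of a car with final spot \<open>P\<close>
  are the \<open>q\<close> with \<open>s < q \<le> P\<close>, where \<open>s\<close> is the nearest available spot below \<open>P\<close> (or \<open>0\<close>).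

  In \<open>Dec\<^sub>i\<^sup>n\<close> every car \<open>c \<le> i\<close> and every car \<open>c \<le> n - 2\<close> finds the spot just below its
  final one available, so it has a single admissible preference. A later car \<open>c \<in> {n - 1, n}\<close>
  with \<open>c > i\<close> sees no available spot below its final spot (\<open>i + 2\<close> resp. \<open>i + 1\<close>): spots
  \<open>1, \<dots>, i\<close> are taken, and spot \<open>i + 1\<close> is next to car \<open>1\<close>, which is not adjacent to
  \<open>n - 1\<close> in \<open>C\<^sub>n\<close> once \<open>n \<ge> 4\<close>. This gives \<open>(i + 2)(i + 1)\<close>, \<open>n\<close> and \<open>1\<close> parking functions.

  For the blocking sequences, the entry \<open>j + 1\<close> preceding \<open>j\<close> in \<open>Dec\<^sub>i\<^sup>n\<close> is flanked by \<open>j\<close>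
  and \<open>j + 2\<close>, so it is not a blocker for \<open>j\<close>; only for \<open>j \<in> {n - 1, n}\<close> is the whole prefix
  up to \<open>j\<close> made of blockers, \<open>n\<close> being a blocker for \<open>n - 1\<close> because its neighbour \<open>1\<close>
  is not adjacent to \<open>n - 1\<close>.
\<close>

section \<open>The parking process, car by car\<close>

definition fpp_run_prefix ::
  "(nat \<Rightarrow> nat \<Rightarrow> bool) \<Rightarrow> nat \<Rightarrow> nat list \<Rightarrow> nat \<Rightarrow> (nat \<Rightarrow> nat) option" where
  "fpp_run_prefix G n p t = foldl (\<lambda>st i. case st of None \<Rightarrow> None
                                   | Some occ \<Rightarrow> park_car G n occ i (p ! (i - 1)))
                               (Some (\<lambda>_. 0)) [1..<t+1]"

lemma fpp_run_eq_prefix: "fpp_run G n p = fpp_run_prefix G n p n"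
  by (simp add: fpp_run_def fpp_run_prefix_def)

lemma fpp_run_prefix_0 [simp]: "fpp_run_prefix G n p 0 = Some (\<lambda>_. 0)"
  by (simp add: fpp_run_prefix_def)

lemma fpp_run_prefix_Suc:
  "fpp_run_prefix G n p (Suc t) =
     (case fpp_run_prefix G n p t of None \<Rightarrow> None | Some occ \<Rightarrow> park_car G n occ (Suc t) (p ! t))"
  unfolding fpp_run_prefix_def by (simp add: upt_Suc_append del: upt_Suc split: option.split)

lemma park_car_eq_Some_iff:
  "park_car G n occ c q = Some occ' \<longleftrightarrow>
     (\<exists>K. occ' = occ(K := c) \<and> spot_available G n occ c K \<and> q \<le> K \<and>
          (\<forall>k. q \<le> k \<and> k < K \<longrightarrow> \<not> spot_available G n occ c k))"
    (is "_ \<longleftrightarrow> (\<exists>K. _ \<and> ?first K)")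
proof
  let ?L = "LEAST k. q \<le> k \<and> spot_available G n occ c k"
  assume park: "park_car G n occ c q = Some occ'"
  then have ex: "\<exists>k. q \<le> k \<and> spot_available G n occ c k"
    by (auto simp: park_car_def split: if_splits)
  then have "occ' = occ(?L := c)" using park by (simp add: park_car_def)
  moreover have "?first ?L" using LeastI_ex[OF ex] not_less_Least by blast
  ultimately show "\<exists>K. occ' = occ(K := c) \<and> ?first K" by blast
next
  assume "\<exists>K. occ' = occ(K := c) \<and> ?first K"
  then obtain K where K: "occ' = occ(K := c)" "?first K" by blast
  have "(LEAST k. q \<le> k \<and> spot_available G n occ c k) = K"
    by (rule Least_equality) (use K(2) not_less in blast)+
  then show "park_car G n occ c q = Some occ'"
    using K by (auto simp: park_car_def)
qed

lemma park_car_eq_update_iff: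
  assumes "occ P = 0" "c \<noteq> 0"
  shows "park_car G n occ c q = Some (occ(P := c)) \<longleftrightarrow>
     spot_available G n occ c P \<and> q \<le> P \<and> (\<forall>k. q \<le> k \<and> k < P \<longrightarrow> \<not> spot_available G n occ c k)"
proof -
  have "occ(P := c) = occ(K := c) \<longleftrightarrow> K = P" for K
    using assms by (metis fun_upd_apply)
  then show ?thesis by (simp add: park_car_eq_Some_iff)
qed

lemma fpp_run_prefix_SucE:
  assumes "fpp_run_prefix G n p (Suc t) = Some occ'"
  obtains occ K where "fpp_run_prefix G n p t = Some occ" "occ' = occ(K := Suc t)"
    "spot_available G n occ (Suc t) K"
  using assms by (auto simp: fpp_run_prefix_Suc park_car_eq_Some_iff split: option.splits)

lemma fpp_run_prefix_None_mono:
  assumes "fpp_run_prefix G n p t = None" "t \<le> t'"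
  shows "fpp_run_prefix G n p t' = None"
  using assms(2,1) by (induction t' rule: dec_induct) (simp_all add: fpp_run_prefix_Suc)

lemma fpp_run_prefix_range:
  "fpp_run_prefix G n p t = Some occ \<Longrightarrow>
     (\<forall>k. occ k \<noteq> 0 \<longrightarrow> 1 \<le> k \<and> k \<le> n) \<and> (\<forall>k. occ k \<le> t)"
proof (induction t arbitrary: occ)
  case (Suc t)
  from fpp_run_prefix_SucE[OF Suc.prems] obtain occ0 K where
    "fpp_run_prefix G n p t = Some occ0" "occ = occ0(K := Suc t)" "spot_available G n occ0 (Suc t) K" .
  with Suc.IH[of occ0] show ?case by (auto simp: spot_available_def le_SucI)
qed simp

lemma fpp_run_prefix_restrict:
  assumes "fpp_run_prefix G n p t = Some occ" "t \<le> t'" "fpp_run_prefix G n p t' = Some occ'"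
  shows "occ = (\<lambda>k. if occ' k \<le> t then occ' k else 0)"
  using assms(2,3)
proof (induction t' arbitrary: occ' rule: dec_induct)
  case base
  with assms(1) fpp_run_prefix_range[OF assms(1)] show ?case by auto
next
  case (step m)
  from fpp_run_prefix_SucE[OF step.prems] obtain occ0 K where
    "fpp_run_prefix G n p m = Some occ0" "occ' = occ0(K := Suc m)" "spot_available G n occ0 (Suc m) K" .
  with step.IH[of occ0] step.hyps show ?case by (auto simp: fun_eq_iff spot_available_def)
qed

definition parked_prefix :: "nat list \<Rightarrow> nat \<Rightarrow> nat \<Rightarrow> nat" where
  "parked_prefix \<pi> t k = (if 1 \<le> k \<and> k \<le> length \<pi> \<and> \<pi> ! (k - 1) \<le> t then \<pi> ! (k - 1) else 0)"

lemma parked_prefix_Suc: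
  assumes "distinct \<pi>" "1 \<le> P" "P \<le> length \<pi>" "\<pi> ! (P - 1) = Suc t"
  shows "parked_prefix \<pi> (Suc t) = (parked_prefix \<pi> t)(P := Suc t)" "parked_prefix \<pi> t P = 0"
proof -
  have "\<pi> ! (k - 1) = Suc t \<longleftrightarrow> k = P" if "1 \<le> k" "k \<le> length \<pi>" for k
    using that assms nth_eq_iff_index_eq[OF assms(1), of "k - 1" "P - 1"] by auto
  with assms show "parked_prefix \<pi> (Suc t) = (parked_prefix \<pi> t)(P := Suc t)"
    by (auto simp: fun_eq_iff parked_prefix_def le_Suc_eq)
  show "parked_prefix \<pi> t P = 0" using assms by (simp add: parked_prefix_def)
qed

lemma fpp_outcome_eq_Some_iff:
  assumes len: "length \<pi> = n" and set: "set \<pi> = {1..n}"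
  shows "fpp_outcome G n p = Some \<pi> \<longleftrightarrow>
     (\<forall>t<n. park_car G n (parked_prefix \<pi> t) (Suc t) (p ! t) = Some (parked_prefix \<pi> (Suc t)))"
proof -
  have in_range: "1 \<le> \<pi> ! k \<and> \<pi> ! k \<le> n" if "k < n" for k
    using set len that nth_mem by fastforce
  have final: "map (parked_prefix \<pi> n) [1..<n+1] = \<pi>"
    using in_range len by (auto simp: list_eq_iff_nth_eq parked_prefix_def simp del: upt_Suc)
  show ?thesis
  proof
    assume "fpp_outcome G n p = Some \<pi>"
    then obtain occ where occ: "fpp_run_prefix G n p n = Some occ" "map occ [1..<n+1] = \<pi>"
      by (auto simp: fpp_outcome_def fpp_run_eq_prefix)
    have occ_final: "occ = parked_prefix \<pi> n"
    proof
      fix k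
      show "occ k = parked_prefix \<pi> n k"
        using fpp_run_prefix_range[OF occ(1)] occ(2) in_range len
        by (cases "1 \<le> k \<and> k \<le> n") (auto simp: parked_prefix_def simp del: upt_Suc)
    qed
    have "fpp_run_prefix G n p t = Some (parked_prefix \<pi> t)" if t: "t \<le> n" for t
    proof -
      obtain a where a: "fpp_run_prefix G n p t = Some a"
        using fpp_run_prefix_None_mono[OF _ t] occ(1) by fastforce
      have "a = (\<lambda>k. if occ k \<le> t then occ k else 0)"
        using fpp_run_prefix_restrict[OF a t occ(1)] .
      also have "\<dots> = parked_prefix \<pi> t"
        using t by (auto simp: fun_eq_iff occ_final parked_prefix_def)
      finally show ?thesis using a by simp
    qed
    then show "\<forall>t<n. park_car G n (parked_prefix \<pi> t) (Suc t) (p ! t) = Some (parked_prefix \<pi> (Suc t))"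
      by (metis Suc_leI fpp_run_prefix_Suc less_imp_le_nat option.simps(5))
  next
    assume steps: "\<forall>t<n. park_car G n (parked_prefix \<pi> t) (Suc t) (p ! t) = Some (parked_prefix \<pi> (Suc t))"
    have "fpp_run_prefix G n p t = Some (parked_prefix \<pi> t)" if "t \<le> n" for t
      using that
    proof (induction t)
      case 0
      have "parked_prefix \<pi> 0 = (\<lambda>_. 0)"
        using in_range len by (auto simp: fun_eq_iff parked_prefix_def)
      then show ?case by simp
    next
      case (Suc t)
      with steps show ?case by (simp add: fpp_run_prefix_Suc)
    qed
    with final show "fpp_outcome G n p = Some \<pi>"
      by (simp add: fpp_outcome_def fpp_run_eq_prefix)
  qed
qed

lemma card_lists_nth_mem:
  assumes "\<forall>t<n. finite (B t)"
  shows "card {xs. length xs = n \<and> (\<forall>t<n. xs ! t \<in> B t)} = (\<Prod>t<n. card (B t))"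
  using assms
proof (induction n arbitrary: B)
  case (Suc n)
  let ?S = "{ys. length ys = n \<and> (\<forall>t<n. ys ! t \<in> B (Suc t))}"
  have "{xs. length xs = Suc n \<and> (\<forall>t<Suc n. xs ! t \<in> B t)} = (\<lambda>(x, ys). x # ys) ` (B 0 \<times> ?S)"
  proof (intro set_eqI iffI)
    fix xs assume "xs \<in> {xs. length xs = Suc n \<and> (\<forall>t<Suc n. xs ! t \<in> B t)}"
    then obtain x ys where "xs = x # ys" "length ys = n" "\<forall>t<Suc n. xs ! t \<in> B t"
      by (auto simp: length_Suc_conv)
    then show "xs \<in> (\<lambda>(x, ys). x # ys) ` (B 0 \<times> ?S)"
      by (auto intro!: image_eqI[where x="(x, ys)"])
  qed (auto simp: nth_Cons split: nat.splits)
  moreover have "card ((\<lambda>(x, ys). x # ys) ` (B 0 \<times> ?S)) = card (B 0) * card ?S"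
    by (subst card_image) (auto simp: inj_on_def card_cartesian_product)
  moreover have "card ?S = (\<Prod>t<n. card (B (Suc t)))"
    using Suc by auto
  ultimately show ?case by (simp add: prod.lessThan_Suc_shift del: prod.lessThan_Suc)
qed simp

lemma num_fpf_with_outcome_eq_prod:
  assumes "length \<pi> = n" "set \<pi> = {1..n}"
  shows "num_fpf_with_outcome G n \<pi> =
    (\<Prod>t<n. card {q \<in> {1..n}. park_car G n (parked_prefix \<pi> t) (Suc t) q = Some (parked_prefix \<pi> (Suc t))})"
proof -
  let ?B = "\<lambda>t. {q \<in> {1..n}. park_car G n (parked_prefix \<pi> t) (Suc t) q = Some (parked_prefix \<pi> (Suc t))}"
  have "{p. length p = n \<and> set p \<subseteq> {1..n} \<and> fpp_outcome G n p = Some \<pi>} =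
        {p. length p = n \<and> (\<forall>t<n. p ! t \<in> ?B t)}"
    using fpp_outcome_eq_Some_iff[OF assms] by (auto simp: set_conv_nth)
  then show ?thesis
    unfolding num_fpf_with_outcome_def using card_lists_nth_mem[of n ?B] by simp
qed

lemma card_preferences_predecessor_available:
  fixes P n :: nat
  assumes "1 \<le> P" "P \<le> n" "A P" "P = 1 \<or> A (P - 1)"
  shows "card {q \<in> {1..n}. A P \<and> q \<le> P \<and> (\<forall>k. q \<le> k \<and> k < P \<longrightarrow> \<not> A k)} = 1"
proof -
  have "{q \<in> {1..n}. A P \<and> q \<le> P \<and> (\<forall>k. q \<le> k \<and> k < P \<longrightarrow> \<not> A k)} = {P}"
  proof (intro set_eqI iffI)
    fix q assume q: "q \<in> {q \<in> {1..n}. A P \<and> q \<le> P \<and> (\<forall>k. q \<le> k \<and> k < P \<longrightarrow> \<not> A k)}"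
    then have "q \<le> P" "1 \<le> q" "\<forall>k. q \<le> k \<and> k < P \<longrightarrow> \<not> A k" by auto
    moreover have "A (P - 1)" if "q < P" using assms that \<open>1 \<le> q\<close> by auto
    ultimately show "q \<in> {P}" by (cases "q < P") auto
  qed (use assms in auto)
  then show ?thesis by simp
qed

lemma card_preferences_none_available_below:
  fixes P n :: nat
  assumes "P \<le> n" "A P" "\<forall>k<P. \<not> A k"
  shows "card {q \<in> {1..n}. A P \<and> q \<le> P \<and> (\<forall>k. q \<le> k \<and> k < P \<longrightarrow> \<not> A k)} = P"
proof -
  have "{q \<in> {1..n}. A P \<and> q \<le> P \<and> (\<forall>k. q \<le> k \<and> k < P \<longrightarrow> \<not> A k)} = {1..P}"
    using assms by auto
  then show ?thesis by simp
qed

section \<open>Blocking sequences\<close>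

lemma pos_of_nth_eq:
  assumes "distinct \<pi>" "m < length \<pi>"
  shows "pos_of \<pi> (\<pi> ! m) = m"
  unfolding pos_of_def
  by (rule Least_equality) (use assms nth_eq_iff_index_eq in auto)

lemma blocking_seq_eq_singleton:
  assumes "distinct \<pi>" "m < length \<pi>" "m = 0 \<or> \<not> is_blocker G \<pi> (\<pi> ! m) (m - 1)"
  shows "blocking_seq (\<pi> ! m) \<pi> G = [\<pi> ! m]"
proof -
  have "(LEAST s. s \<le> m \<and> (\<forall>k. s \<le> k \<and> k \<le> m \<longrightarrow> is_blocker G \<pi> (\<pi> ! m) k)) = m"
  proof (rule Least_equality)
    fix s assume s: "s \<le> m \<and> (\<forall>k. s \<le> k \<and> k \<le> m \<longrightarrow> is_blocker G \<pi> (\<pi> ! m) k)"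
    show "m \<le> s"
    proof (rule ccontr)
      assume "\<not> m \<le> s"
      then have "is_blocker G \<pi> (\<pi> ! m) (m - 1)" using s by auto
      with assms(3) \<open>\<not> m \<le> s\<close> show False by auto
    qed
  qed (use assms(2) in \<open>auto simp: is_blocker_def\<close>)
  then show ?thesis
    using assms by (simp add: blocking_seq_def pos_of_nth_eq take_Suc_conv_app_nth)
qed

lemma blocking_seq_eq_take:
  assumes "distinct \<pi>" "m < length \<pi>" "\<forall>k \<le> m. is_blocker G \<pi> (\<pi> ! m) k"
  shows "blocking_seq (\<pi> ! m) \<pi> G = take (m + 1) \<pi>"
proof -
  have "(LEAST s. s \<le> m \<and> (\<forall>k. s \<le> k \<and> k \<le> m \<longrightarrow> is_blocker G \<pi> (\<pi> ! m) k)) = 0"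
    by (rule Least_equality) (use assms(3) in auto)
  then show ?thesis
    using assms by (simp add: blocking_seq_def pos_of_nth_eq)
qed

section \<open>The permutation \<open>Dec\<^sub>i\<^sup>n\<close>\<close>

lemma length_Dec [simp]: "i \<le> n \<Longrightarrow> length (Dec n i) = n"
  by (simp add: Dec_def del: upt_Suc)

lemma set_Dec: "i \<le> n \<Longrightarrow> set (Dec n i) = {1..n}"
  by (auto simp: Dec_def)

lemma distinct_Dec: "distinct (Dec n i)"
  by (auto simp: Dec_def)

lemma nth_Dec: "k < n \<Longrightarrow> i \<le> n \<Longrightarrow> Dec n i ! k = (if k < i then i - k else n + i - k)"
  by (auto simp: Dec_def nth_append rev_nth simp del: upt_Suc)

definition dec_spot :: "nat \<Rightarrow> nat \<Rightarrow> nat \<Rightarrow> nat" where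
  "dec_spot n i c = (if c \<le> i then i + 1 - c else n + i + 1 - c)"

lemma dec_spot_bounds: "1 \<le> c \<Longrightarrow> c \<le> n \<Longrightarrow> i \<le> n \<Longrightarrow> 1 \<le> dec_spot n i c \<and> dec_spot n i c \<le> n"
  by (auto simp: dec_spot_def)

lemma nth_Dec_before_dec_spot:
  assumes "i \<le> n" "1 \<le> c" "c \<le> i \<or> c + 2 \<le> n" "d \<le> 2" "d < dec_spot n i c"
  shows "Dec n i ! (dec_spot n i c - 1 - d) = c + d"
  using assms by (subst nth_Dec) (auto simp: dec_spot_def)

lemma nth_Dec_dec_spot: "1 \<le> c \<Longrightarrow> c \<le> n \<Longrightarrow> i \<le> n \<Longrightarrow> Dec n i ! (dec_spot n i c - 1) = c"
  by (subst nth_Dec) (auto simp: dec_spot_def)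

lemma parked_prefix_Dec:
  assumes "i \<le> n"
  shows "parked_prefix (Dec n i) t k =
    (if 1 \<le> k \<and> k \<le> i \<and> i + 1 - k \<le> t then i + 1 - k
     else if i < k \<and> k \<le> n \<and> n + i + 1 - k \<le> t then n + i + 1 - k else 0)"
proof -
  have "Dec n i ! (k - 1) = (if k \<le> i then i + 1 - k else n + i + 1 - k)" if "1 \<le> k" "k \<le> n"
    using assms that by (subst nth_Dec) auto
  then show ?thesis using assms by (auto simp: parked_prefix_def)
qed

lemma nth_Dec_after_dec_spot:
  assumes "i \<le> n" "2 \<le> c" "c \<le> n" "c \<noteq> i + 1"
  shows "Dec n i ! dec_spot n i c = c - 1"
  using assms by (subst nth_Dec) (auto simp: dec_spot_def)

lemma parked_prefix_Dec_dec_spot: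
  assumes "i \<le> n" "1 \<le> c" "c \<le> n"
  shows "parked_prefix (Dec n i) (c - 1) (dec_spot n i c) = 0"
  using assms nth_Dec_dec_spot[OF assms(2,3,1)] by (auto simp: parked_prefix_def)

lemma parked_prefix_Dec_after_dec_spot:
  assumes "i \<le> n" "1 \<le> c" "c \<le> n"
  shows "parked_prefix (Dec n i) (c - 1) (dec_spot n i c + 1) \<in> {0, c - 1}"
proof (cases "2 \<le> c \<and> c \<noteq> i + 1")
  case True
  then show ?thesis using assms nth_Dec_after_dec_spot[OF assms(1)] by (auto simp: parked_prefix_def)
next
  case False
  then show ?thesis using assms by (auto simp: parked_prefix_def dec_spot_def)
qed

lemma parked_prefix_Dec_below_dec_spot:
  assumes "i \<le> n" "1 \<le> c" "c \<le> i \<or> c + 2 \<le> n" "d \<le> 2"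
  shows "parked_prefix (Dec n i) (c - 1) (dec_spot n i c - d) = 0"
proof (cases "d < dec_spot n i c")
  case True
  then show ?thesis using assms nth_Dec_before_dec_spot[OF assms(1-4) True]
    by (auto simp: parked_prefix_def)
qed (simp add: parked_prefix_def)

lemma parked_prefix_Dec_below_late_car:
  assumes "1 \<le> i" "i < c" "c \<le> n" "k < dec_spot n i c"
  shows "parked_prefix (Dec n i) (c - 1) k = (if k = 0 then 0 else if k \<le> i then i + 1 - k else 0)"
  using assms by (auto simp: parked_prefix_Dec dec_spot_def)

definition dec_available :: "nat \<Rightarrow> nat \<Rightarrow> nat \<Rightarrow> nat \<Rightarrow> bool" where
  "dec_available n i c k = spot_available (cycle_adj n) n (parked_prefix (Dec n i) (c - 1)) c k"

lemma cycle_adj_pred: "2 \<le> c \<Longrightarrow> c \<le> n \<Longrightarrow> cycle_adj n c (c - 1)"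
  by (auto simp: cycle_adj_def)

lemma dec_available_dec_spot:
  assumes "4 \<le> n" "1 \<le> i" "i \<le> n" "1 \<le> c" "c \<le> n"
  shows "dec_available n i c (dec_spot n i c)"
proof -
  let ?occ = "parked_prefix (Dec n i) (c - 1)" and ?P = "dec_spot n i c"
  have left: "?occ (?P - 1) = 0 \<or> cycle_adj n c (?occ (?P - 1))"
  proof (cases "c \<le> i \<or> c + 2 \<le> n")
    case True
    then show ?thesis using parked_prefix_Dec_below_dec_spot[OF assms(3,4) True, of 1] by simp
  next
    case False
    \<comment> \<open>for \<open>c = n\<close> the left neighbour is car \<open>1\<close>, adjacent to \<open>n\<close> in the cycle\<close>
    then have "?occ (?P - 1) = (if c = n then 1 else 0)" "cycle_adj n n 1"
      using parked_prefix_Dec_below_late_car[OF assms(2) _ assms(5), of "?P - 1"] assms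
      by (auto simp: dec_spot_def cycle_adj_def)
    then show ?thesis by simp
  qed
  have "?occ (?P + 1) = 0 \<or> cycle_adj n c (?occ (?P + 1))"
    using parked_prefix_Dec_after_dec_spot[OF assms(3-5)] cycle_adj_pred[of c n] assms
    by (cases "c = 1") auto
  with left show ?thesis
    using parked_prefix_Dec_dec_spot[OF assms(3-5)] dec_spot_bounds[OF assms(4,5,3)]
    unfolding dec_available_def spot_available_def by simp
qed

lemma dec_available_below_dec_spot:
  assumes "1 \<le> i" "i \<le> n" "1 \<le> c" "c \<le> i \<or> c + 2 \<le> n" "2 \<le> dec_spot n i c"
  shows "dec_available n i c (dec_spot n i c - 1)"
proof -
  have "dec_spot n i c - 1 - 1 = dec_spot n i c - 2" "dec_spot n i c - 1 + 1 = dec_spot n i c"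
    using assms(5) by simp_all
  then show ?thesis
    using parked_prefix_Dec_below_dec_spot[OF assms(2-4), of 0] parked_prefix_Dec_below_dec_spot[OF assms(2-4), of 1]
      parked_prefix_Dec_below_dec_spot[OF assms(2-4), of 2] dec_spot_bounds[OF assms(3) _ assms(2)] assms
    unfolding dec_available_def spot_available_def by auto
qed

lemma not_dec_available_below_late_car:
  assumes "4 \<le> n" "1 \<le> i" "i < c" "n - 1 \<le> c" "c \<le> n" "k < dec_spot n i c"
  shows "\<not> dec_available n i c k"
proof
  assume avail: "dec_available n i c k"
  let ?occ = "parked_prefix (Dec n i) (c - 1)"
  have occ: "?occ k' = (if k' = 0 then 0 else if k' \<le> i then i + 1 - k' else 0)" if "k' \<le> k" for k'
    using parked_prefix_Dec_below_late_car[OF assms(2,3,5)] assms(6) that by simp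
  have "1 \<le> k" "?occ k = 0" using avail by (auto simp: dec_available_def spot_available_def)
  then have "k = i + 1" "c = n - 1"
    using occ[of k] assms by (auto simp: dec_spot_def split: if_splits)
  \<comment> \<open>spot \<open>i + 1\<close> is next to car \<open>1\<close>, which is not adjacent to \<open>n - 1\<close> once \<open>n \<ge> 4\<close>\<close>
  moreover have "?occ (k - 1) = 1" using occ[of "k - 1"] \<open>k = i + 1\<close> assms(2) by simp
  ultimately show False
    using avail assms(1) by (auto simp: dec_available_def spot_available_def cycle_adj_def)
qed

definition dec_pref_count :: "nat \<Rightarrow> nat \<Rightarrow> nat \<Rightarrow> nat" where
  "dec_pref_count n i c = (if c \<le> i \<or> c + 2 \<le> n then 1 else dec_spot n i c)"

lemma card_Dec_preferences:
  assumes "4 \<le> n" "1 \<le> i" "i \<le> n" "t < n"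
  shows "card {q \<in> {1..n}. park_car (cycle_adj n) n (parked_prefix (Dec n i) t) (Suc t) q
                             = Some (parked_prefix (Dec n i) (Suc t))} = dec_pref_count n i (Suc t)"
proof -
  let ?c = "Suc t"
  let ?P = "dec_spot n i ?c"
  let ?A = "dec_available n i ?c"
  have c: "1 \<le> ?c" "?c \<le> n" using assms(4) by simp_all
  have P: "1 \<le> ?P" "?P \<le> n" using dec_spot_bounds[OF c assms(3)] by simp_all
  have "parked_prefix (Dec n i) ?c = (parked_prefix (Dec n i) t)(?P := ?c)"
       "parked_prefix (Dec n i) t ?P = 0"
    using parked_prefix_Suc[OF distinct_Dec P(1)] P(2) nth_Dec_dec_spot[OF c assms(3)] assms(3)
    by simp_all
  then have "{q \<in> {1..n}. park_car (cycle_adj n) n (parked_prefix (Dec n i) t) ?c q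
                           = Some (parked_prefix (Dec n i) ?c)}
      = {q \<in> {1..n}. ?A ?P \<and> q \<le> ?P \<and> (\<forall>k. q \<le> k \<and> k < ?P \<longrightarrow> \<not> ?A k)}"
    using park_car_eq_update_iff[of "parked_prefix (Dec n i) t" ?P ?c] unfolding dec_available_def by simp
  also have "card \<dots> = dec_pref_count n i ?c"
  proof (cases "?c \<le> i \<or> ?c + 2 \<le> n")
    case True
    have "?P = 1 \<or> ?A (?P - 1)"
      using dec_available_below_dec_spot[OF assms(2,3) c(1) True] P(1) by force
    then show ?thesis unfolding dec_pref_count_def
      using card_preferences_predecessor_available[OF P, of ?A]
        dec_available_dec_spot[OF assms(1-3) c] True by simp
  next
    case False
    then have "i < ?c" "n - 1 \<le> ?c" by linarith+
    then have "\<forall>k<?P. \<not> ?A k"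
      using not_dec_available_below_late_car[OF assms(1,2)] c(2) by blast
    then show ?thesis unfolding dec_pref_count_def
      using card_preferences_none_available_below[OF P(2), of ?A]
        dec_available_dec_spot[OF assms(1-3) c] False by simp
  qed
  finally show ?thesis .
qed

lemma num_fpf_with_outcome_Dec:
  assumes "4 \<le> n" "1 \<le> i" "i \<le> n"
  shows "num_fpf_with_outcome (cycle_adj n) n (Dec n i) = dec_pref_count n i (n - 1) * dec_pref_count n i n"
proof -
  obtain m where n: "n = Suc (Suc m)"
    using assms(1) by (intro that[of "n - 2"]) simp
  have "num_fpf_with_outcome (cycle_adj n) n (Dec n i) = (\<Prod>t<n. dec_pref_count n i (Suc t))"
    unfolding num_fpf_with_outcome_eq_prod[OF length_Dec[OF assms(3)] set_Dec[OF assms(3)]]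
    using card_Dec_preferences[OF assms] by (intro prod.cong) simp_all
  moreover have "(\<Prod>t<m. dec_pref_count n i (Suc t)) = 1"
    by (rule prod.neutral) (auto simp: dec_pref_count_def n)
  ultimately show ?thesis by (simp add: n)
qed

lemma blocking_seq_Dec_singleton:
  assumes "1 \<le> i" "i \<le> n" "1 \<le> j" "j \<le> i \<or> j + 2 \<le> n"
  shows "blocking_seq j (Dec n i) (cycle_adj n) = [j]"
proof -
  let ?m = "dec_spot n i j - 1"
  have "j \<le> n" using assms by auto
  then have m: "?m < n" "Dec n i ! ?m = j"
    using dec_spot_bounds[of j n i] nth_Dec_dec_spot[of j n i] assms by auto
  have "\<not> is_blocker (cycle_adj n) (Dec n i) j (?m - 1)" if "?m \<noteq> 0"
  proof
    assume blocker: "is_blocker (cycle_adj n) (Dec n i) j (?m - 1)"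
    have "Dec n i ! (?m - 1) = j + 1"
      using nth_Dec_before_dec_spot[OF assms(2-4), of 1] that by simp
    with blocker have "\<exists>m'. (m' + 1 = ?m - 1 \<or> m' = ?m - 1 + 1) \<and> Dec n i ! m' < j"
      by (auto simp: is_blocker_def)
    moreover have "?m - 1 + 1 = ?m" using that by simp
    ultimately obtain m' where m': "m' + 1 = ?m - 1 \<or> m' = ?m" "Dec n i ! m' < j"
      by metis
    show False
    proof (cases "m' = ?m")
      case False
      then have "m' = ?m - 2" "2 \<le> ?m" using m'(1) by linarith+
      then have "Dec n i ! m' = j + 2"
        using nth_Dec_before_dec_spot[OF assms(2-4), of 2] by simp
      with m'(2) show False by simp
    qed (use m m' in simp)
  qed
  then show ?thesis
    using blocking_seq_eq_singleton[OF distinct_Dec, of ?m n i "cycle_adj n"] m assms by auto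
qed

lemma blocking_seq_Dec_pred_last:
  assumes "4 \<le> n" "1 \<le> i" "i + 2 \<le> n"
  shows "blocking_seq (n - 1) (Dec n i) (cycle_adj n) = rev [1..<i+1] @ [n, n - 1]"
proof -
  have "is_blocker (cycle_adj n) (Dec n i) (n - 1) k" if "k \<le> i + 1" for k
  proof (cases "k = i")
    case True
    \<comment> \<open>car \<open>n\<close> sits next to car \<open>1\<close>, which is not adjacent to \<open>n - 1\<close>\<close>
    have "Dec n i ! k = n" "Dec n i ! (i - 1) = 1" "\<not> cycle_adj n 1 (n - 1)"
      using True assms by (auto simp: nth_Dec cycle_adj_def)
    then show ?thesis unfolding is_blocker_def using True assms
      by (intro conjI disjI2) (auto intro!: exI[of _ "i - 1"])
  next
    case False
    then show ?thesis using that assms by (auto simp: is_blocker_def nth_Dec)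
  qed
  moreover have "Dec n i ! (i + 1) = n - 1" using assms by (simp add: nth_Dec)
  moreover have "take (i + 2) (Dec n i) = rev [1..<i+1] @ [n, n - 1]"
  proof -
    obtain m where n: "n = Suc (Suc m)"
      using assms(1) by (intro that[of "n - 2"]) simp
    have "[i+1..<n+1] = [i+1..<n-1] @ [n - 1, n]"
      using assms by (simp add: n)
    then show ?thesis using assms by (simp add: Dec_def del: upt_Suc)
  qed
  ultimately show ?thesis
    using blocking_seq_eq_take[OF distinct_Dec, of "i + 1" n i] assms by simp
qed

lemma blocking_seq_Dec_last:
  assumes "1 \<le> i" "i < n"
  shows "blocking_seq n (Dec n i) (cycle_adj n) = rev [1..<i+1] @ [n]"
proof -
  have "is_blocker (cycle_adj n) (Dec n i) n k" if "k \<le> i" for k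
    using that assms by (auto simp: is_blocker_def nth_Dec)
  moreover have "Dec n i ! i = n" using assms by (simp add: nth_Dec)
  moreover have "take (i + 1) (Dec n i) = rev [1..<i+1] @ [n]"
  proof -
    have "[i+1..<n+1] = [i+1..<n] @ [n]" using assms by simp
    then show ?thesis using assms by (simp add: Dec_def del: upt_Suc)
  qed
  ultimately show ?thesis
    using blocking_seq_eq_take[OF distinct_Dec, of i n i] assms by simp
qed

theorem proposition2p8:
  fixes n :: nat
  assumes "n \<ge> 4"
  shows
   "(\<forall>i. 1 \<le> i \<and> i \<le> n - 2 \<longrightarrow>
       (\<forall>j. 1 \<le> j \<and> j \<le> n - 2 \<longrightarrow> blocking_seq j (Dec n i) (cycle_adj n) = [j]) \<and>
       blocking_seq (n - 1) (Dec n i) (cycle_adj n) = rev [1..<i+1] @ [n, n - 1] \<and>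
       blocking_seq n (Dec n i) (cycle_adj n) = rev [1..<i+1] @ [n] \<and>
       num_fpf_with_outcome (cycle_adj n) n (Dec n i) = (i + 1) * (i + 2))
    \<and> ((\<forall>j. 1 \<le> j \<and> j \<le> n - 1 \<longrightarrow> blocking_seq j (Dec n (n - 1)) (cycle_adj n) = [j]) \<and>
       blocking_seq n (Dec n (n - 1)) (cycle_adj n) = rev [1..<n] @ [n] \<and>
       num_fpf_with_outcome (cycle_adj n) n (Dec n (n - 1)) = n)
    \<and> ((\<forall>j. 1 \<le> j \<and> j \<le> n \<longrightarrow> blocking_seq j (Dec n n) (cycle_adj n) = [j]) \<and>
       num_fpf_with_outcome (cycle_adj n) n (Dec n n) = 1)"
proof (intro conjI allI impI)
  fix i assume "1 \<le> i \<and> i \<le> n - 2"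
  then have i: "1 \<le> i" "i + 2 \<le> n" using assms by linarith+
  then show "num_fpf_with_outcome (cycle_adj n) n (Dec n i) = (i + 1) * (i + 2)"
    using num_fpf_with_outcome_Dec[OF assms, of i] by (simp add: dec_pref_count_def dec_spot_def)
  show "blocking_seq (n - 1) (Dec n i) (cycle_adj n) = rev [1..<i+1] @ [n, n - 1]"
    using blocking_seq_Dec_pred_last[OF assms i] .
  show "blocking_seq n (Dec n i) (cycle_adj n) = rev [1..<i+1] @ [n]"
    using blocking_seq_Dec_last i by simp
  fix j assume "1 \<le> j \<and> j \<le> n - 2"
  then show "blocking_seq j (Dec n i) (cycle_adj n) = [j]"
    using blocking_seq_Dec_singleton[of i n j] i by (simp add: le_diff_conv2)
qed (use assms num_fpf_with_outcome_Dec[OF assms]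
     in \<open>auto simp: blocking_seq_Dec_singleton blocking_seq_Dec_last dec_pref_count_def dec_spot_def\<close>)

end
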